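(* Let $f:\mathbb{R}^d\to\mathbb{R}$ be convex and $L$-smooth (differentiable with $\|\nabla f(x)-\nabla f(y)\|\le L\|x-y\|$), and let $x_*$ be a minimizer of $f$. Consider the iterate-averaging form of Nesterov's method: $z_0=x_0\in\mathbb{R}^d$ and for $k\ge 0$ $$y_k=(1-c_{k+1})x_k+c_{k+1}z_k,\qquad z_{k+1}=z_k-\rho_k\nabla f(y_k),\qquad x_{k+1}=(1-c_{k+1})x_k+c_{k+1}z_{k+1},$$ with $c_{k+1}=\frac{2}{k+2}$ and $\rho_k=\frac{k+1}{2L}$. Then for every $n\ge 1$, $$f(x_n)-f(x_* )\le\frac{2L}{n^{\overline{2}}}\|x_0-x_*\|^2,$$ where $n^{\overline 2}=n(n+1)$. *)

theory Defs
  imports "HOL-Analysis.Analysis"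
begin

definition nest_c :: "nat \<Rightarrow> real" where
  "nest_c k = 2 / (real k + 2)"   \<comment> \<open>this is c_{k+1}\<close>

definition nest_rho :: "real \<Rightarrow> nat \<Rightarrow> real" where
  "nest_rho L k = (real k + 1) / (2 * L)"

definition nest_y :: "real \<Rightarrow> nat \<Rightarrow> 'a::real_vector \<Rightarrow> 'a \<Rightarrow> 'a" where
  "nest_y L k x z = (1 - nest_c k) *\<^sub>R x + nest_c k *\<^sub>R z"

fun nesterov :: "('a::real_vector \<Rightarrow> 'a) \<Rightarrow> real \<Rightarrow> 'a \<Rightarrow> nat \<Rightarrow> 'a \<times> 'a" where
  "nesterov g L x0 0 = (x0, x0)"
| "nesterov g L x0 (Suc k) =
     (let (x, z) = nesterov g L x0 k;
          y = nest_y L k x z;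
          z' = z - nest_rho L k *\<^sub>R g y;
          x' = (1 - nest_c k) *\<^sub>R x + nest_c k *\<^sub>R z'
      in (x', z'))"

end

theory Submission
  imports Defs
begin

text \<open>The weights \<open>A\<^sub>k = k(k+1)/(4L)\<close> make the energy
  \<open>E\<^sub>k = A\<^sub>k (f x\<^sub>k - f x\<^sub>*) + \<parallel>z\<^sub>k - x\<^sub>*\<parallel>\<^sup>2/2\<close> nonincreasing. The step size
  \<open>\<rho>\<^sub>k\<close> is the increment \<open>a\<^sub>k = A\<^sub>k\<^sub>+\<^sub>1 - A\<^sub>k\<close> and \<open>c\<^sub>k\<^sub>+\<^sub>1 = a\<^sub>k / A\<^sub>k\<^sub>+\<^sub>1\<close>, so
  \<open>A\<^sub>k\<^sub>+\<^sub>1 y\<^sub>k = A\<^sub>k x\<^sub>k + a\<^sub>k z\<^sub>k\<close>, and \<open>L a\<^sub>k\<^sup>2 \<le> A\<^sub>k\<^sub>+\<^sub>1\<close>. Bound \<open>f x\<^sub>k\<^sub>+\<^sub>1\<close> from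
  above by the quadratic upper bound of the \<open>L\<close>-smooth \<open>f\<close> at \<open>y\<^sub>k\<close>, and
  \<open>A\<^sub>k f x\<^sub>k + a\<^sub>k f x\<^sub>*\<close> from below by tangent planes of the convex \<open>f\<close> at
  \<open>y\<^sub>k\<close>: the inner-product terms cancel exactly against the change of
  \<open>\<parallel>z\<^sub>k - x\<^sub>*\<parallel>\<^sup>2/2\<close>. Hence \<open>A\<^sub>n (f x\<^sub>n - f x\<^sub>*) \<le> E\<^sub>0 = \<parallel>x\<^sub>0 - x\<^sub>*\<parallel>\<^sup>2/2\<close>.\<close>

lemma has_real_derivative_along_line:
  fixes f :: "'a::real_inner \<Rightarrow> real"
  assumes grad: "\<And>x. (f has_derivative (\<lambda>h. grad x \<bullet> h)) (at x)"
  shows "((\<lambda>t. f (y + t *\<^sub>R d)) has_real_derivative grad (y + t *\<^sub>R d) \<bullet> d) (at t)"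
proof -
  have "((\<lambda>t. y + t *\<^sub>R d) has_derivative (\<lambda>s. s *\<^sub>R d)) (at t)"
    by (auto intro!: derivative_eq_intros)
  from has_derivative_compose[OF this grad]
  show ?thesis
    by (simp add: has_field_derivative_def o_def mult_commute_abs)
qed

lemma convex_on_along_line:
  assumes "convex_on UNIV f"
  shows "convex_on UNIV (\<lambda>t::real. f (y + t *\<^sub>R d))"
proof (rule convex_onI)
  fix t a b :: real
  assume t: "0 < t" "t < 1"
  have "y + ((1 - t) * a + t * b) *\<^sub>R d = (1 - t) *\<^sub>R (y + a *\<^sub>R d) + t *\<^sub>R (y + b *\<^sub>R d)"
    by (simp add: algebra_simps)
  with convex_onD[OF assms, of t "y + a *\<^sub>R d" "y + b *\<^sub>R d"] t
  show "f (y + ((1 - t) *\<^sub>R a + t *\<^sub>R b) *\<^sub>R d) \<le> (1 - t) * f (y + a *\<^sub>R d) + t * f (y + b *\<^sub>R d)"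
    by simp
qed simp

lemma convex_on_imp_above_tangent_plane:
  fixes f :: "'a::real_inner \<Rightarrow> real"
  assumes convex: "convex_on UNIV f"
    and grad: "\<And>x. (f has_derivative (\<lambda>h. grad x \<bullet> h)) (at x)"
  shows "f y + grad y \<bullet> (x - y) \<le> f x"
proof -
  let ?h = "\<lambda>t. f (y + t *\<^sub>R (x - y))"
  have "(?h has_real_derivative grad y \<bullet> (x - y)) (at 0 within UNIV)"
    using has_real_derivative_along_line[OF grad, of y "x - y" 0] by simp
  from convex_on_imp_above_tangent[OF convex_on_along_line[OF convex] _ _ _ this, of 1]
  show ?thesis by simp
qed

lemma lipschitz_gradient_imp_quadratic_upper_bound:
  fixes f :: "'a::real_inner \<Rightarrow> real"
  assumes grad: "\<And>x. (f has_derivative (\<lambda>h. grad x \<bullet> h)) (at x)"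
    and smooth: "\<And>x y. norm (grad x - grad y) \<le> L * norm (x - y)"
  shows "f x \<le> f y + grad y \<bullet> (x - y) + L / 2 * (norm (x - y))\<^sup>2"
proof -
  define d where "d = x - y"
  define \<phi> where "\<phi> t = f (y + t *\<^sub>R d) - t * (grad y \<bullet> d) - L / 2 * t\<^sup>2 * (norm d)\<^sup>2" for t
  have deriv_nonpos: "\<exists>D. (\<phi> has_real_derivative D) (at t) \<and> D \<le> 0" if "0 \<le> t" for t
  proof (intro exI conjI)
    show "(\<phi> has_real_derivative grad (y + t *\<^sub>R d) \<bullet> d - grad y \<bullet> d - L * t * (norm d)\<^sup>2) (at t)"
      unfolding \<phi>_def
      by (auto intro!: derivative_eq_intros has_real_derivative_along_line[OF grad])
    have "grad (y + t *\<^sub>R d) \<bullet> d - grad y \<bullet> d \<le> norm (grad (y + t *\<^sub>R d) - grad y) * norm d"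
      by (metis inner_diff_left norm_cauchy_schwarz)
    also have "\<dots> \<le> L * t * norm d * norm d"
      using smooth[of "y + t *\<^sub>R d" y] \<open>0 \<le> t\<close> by (intro mult_right_mono) auto
    also have "\<dots> = L * t * (norm d)\<^sup>2"
      by (simp add: power2_eq_square)
    finally show "grad (y + t *\<^sub>R d) \<bullet> d - grad y \<bullet> d - L * t * (norm d)\<^sup>2 \<le> 0"
      by simp
  qed
  have "\<phi> 1 \<le> \<phi> 0"
    by (rule DERIV_nonpos_imp_nonincreasing) (simp_all add: deriv_nonpos)
  then show ?thesis
    by (simp add: \<phi>_def d_def)
qed

lemma averaged_gradient_step_energy_decrease:
  fixes f :: "'a::real_inner \<Rightarrow> real"
  assumes convex: "convex_on UNIV f"
    and grad: "\<And>x. (f has_derivative (\<lambda>h. grad x \<bullet> h)) (at x)"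
    and smooth: "\<And>x y. norm (grad x - grad y) \<le> L * norm (x - y)"
    and A: "0 \<le> A" and a: "0 < a" and step_size: "L * a\<^sup>2 \<le> A + a"
    and c: "(A + a) * c = a"
    and y: "y = (1 - c) *\<^sub>R x + c *\<^sub>R z"
    and z': "z' = z - a *\<^sub>R grad y"
    and x': "x' = (1 - c) *\<^sub>R x + c *\<^sub>R z'"
  shows "(A + a) * (f x' - f xs) + (norm (z' - xs))\<^sup>2 / 2
           \<le> A * (f x - f xs) + (norm (z - xs))\<^sup>2 / 2"
proof -
  define g where "g = grad y"
  have c_nonneg: "0 \<le> c"
    using zero_less_mult_pos[of "A + a" c] c A a by simp
  have weights: "A *\<^sub>R (x - y) + a *\<^sub>R (xs - y) = a *\<^sub>R (xs - z)"
  proof -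
    have "(A + a) *\<^sub>R y = A *\<^sub>R x + a *\<^sub>R z"
      using c unfolding y by (simp add: algebra_simps)
    then show ?thesis
      by (simp add: algebra_simps)
  qed
  have "x' - y = - (c * a) *\<^sub>R g"
    unfolding x' y z' g_def by (simp add: algebra_simps)
  then have descent: "f x' \<le> f y - c * a * (g \<bullet> g) + L / 2 * (c * a)\<^sup>2 * (g \<bullet> g)"
    using lipschitz_gradient_imp_quadratic_upper_bound[OF grad smooth, of x' y]
    by (simp add: g_def power_mult_distrib power2_norm_eq_inner[symmetric])
  have ca: "(A + a) * (c * a) = a\<^sup>2"
    using c by (simp add: power2_eq_square)
  have curvature: "(A + a) * (L / 2 * (c * a)\<^sup>2) \<le> a\<^sup>2 / 2"
  proof -
    have "(A + a) * (L / 2 * (c * a)\<^sup>2) = c * a * (L * a\<^sup>2) / 2"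
      using c by (simp add: power2_eq_square algebra_simps)
    also have "\<dots> \<le> c * a * (A + a) / 2"
      using step_size c_nonneg a by (simp add: mult_left_mono)
    also have "\<dots> = a\<^sup>2 / 2"
      using ca by (simp add: ac_simps)
    finally show ?thesis .
  qed
  have upper: "(A + a) * f x' \<le> (A + a) * f y - a\<^sup>2 / 2 * (g \<bullet> g)"
  proof -
    have "(A + a) * f x' \<le> (A + a) * f y - (A + a) * (c * a) * (g \<bullet> g)
                             + (A + a) * (L / 2 * (c * a)\<^sup>2) * (g \<bullet> g)"
      using mult_left_mono[OF descent, of "A + a"] A a by (simp add: algebra_simps)
    then show ?thesis
      using ca mult_right_mono[OF curvature inner_ge_zero[of g]] by simp
  qed
  have lower: "A * f x + a * f xs \<ge> (A + a) * f y + a * (g \<bullet> (xs - z))"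
  proof -
    have "A * (f y + g \<bullet> (x - y)) + a * (f y + g \<bullet> (xs - y)) \<le> A * f x + a * f xs"
      using convex_on_imp_above_tangent_plane[OF convex grad, of y] A a unfolding g_def
      by (intro add_mono mult_left_mono) auto
    moreover have "A * (g \<bullet> (x - y)) + a * (g \<bullet> (xs - y)) = a * (g \<bullet> (xs - z))"
      using arg_cong[OF weights, of "inner g"] by (simp add: inner_add_right)
    ultimately show ?thesis
      by (simp add: algebra_simps)
  qed
  have "(norm (z' - xs))\<^sup>2 = (norm (z - xs))\<^sup>2 - 2 * a * (g \<bullet> (z - xs)) + a\<^sup>2 * (g \<bullet> g)"
    unfolding z' g_def[symmetric] power2_norm_eq_inner
    by (simp add: inner_diff_left inner_diff_right inner_commute power2_eq_square algebra_simps)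
  with upper lower show ?thesis
    by (simp add: algebra_simps inner_diff_right)
qed

definition nesterov_weight :: "real \<Rightarrow> nat \<Rightarrow> real" where
  "nesterov_weight L k = real k * (real k + 1) / (4 * L)"

lemma nesterov_weight_Suc: "nesterov_weight L (Suc k) = nesterov_weight L k + nest_rho L k"
  by (cases "L = 0") (simp_all add: nesterov_weight_def nest_rho_def field_simps)

lemma nesterov_weight_nest_c:
  assumes "L > 0"
  shows "nesterov_weight L (Suc k) * nest_c k = nest_rho L k"
proof -
  have "real k + 2 \<noteq> 0"
    by linarith
  with assms show ?thesis
    unfolding nesterov_weight_def nest_c_def nest_rho_def
    by (simp add: divide_simps) (simp add: algebra_simps)
qed

lemma nesterov_step_size_bound:
  assumes "L > 0"
  shows "L * (nest_rho L k)\<^sup>2 \<le> nesterov_weight L (Suc k)"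
  using assms by (simp add: nesterov_weight_def nest_rho_def power2_eq_square field_simps)

lemma nesterov_energy_bound:
  fixes f :: "'a::real_inner \<Rightarrow> real"
  assumes L_pos: "L > 0"
    and convex: "convex_on UNIV f"
    and grad: "\<And>x. (f has_derivative (\<lambda>h. grad x \<bullet> h)) (at x)"
    and smooth: "\<And>x y. norm (grad x - grad y) \<le> L * norm (x - y)"
  shows "nesterov_weight L k * (f (fst (nesterov grad L x0 k)) - f xs)
           + (norm (snd (nesterov grad L x0 k) - xs))\<^sup>2 / 2 \<le> (norm (x0 - xs))\<^sup>2 / 2"
proof (induction k)
  case 0
  show ?case
    by (simp add: nesterov_weight_def)
next
  case (Suc k)
  obtain x z where xz: "nesterov grad L x0 k = (x, z)"
    by fastforce
  define y where "y = nest_y L k x z"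
  define z' where "z' = z - nest_rho L k *\<^sub>R grad y"
  define x' where "x' = (1 - nest_c k) *\<^sub>R x + nest_c k *\<^sub>R z'"
  have "nesterov grad L x0 (Suc k) = (x', z')"
    using xz by (simp add: x'_def z'_def y_def Let_def)
  moreover have "nesterov_weight L (Suc k) * (f x' - f xs) + (norm (z' - xs))\<^sup>2 / 2
                   \<le> nesterov_weight L k * (f x - f xs) + (norm (z - xs))\<^sup>2 / 2"
  proof -
    have "0 \<le> nesterov_weight L k" "0 < nest_rho L k"
      using L_pos by (simp_all add: nesterov_weight_def nest_rho_def)
    moreover have "L * (nest_rho L k)\<^sup>2 \<le> nesterov_weight L k + nest_rho L k"
      "(nesterov_weight L k + nest_rho L k) * nest_c k = nest_rho L k"
      using nesterov_step_size_bound[OF L_pos] nesterov_weight_nest_c[OF L_pos]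
      by (simp_all add: nesterov_weight_Suc)
    moreover have "y = (1 - nest_c k) *\<^sub>R x + nest_c k *\<^sub>R z"
      by (simp add: y_def nest_y_def)
    ultimately show ?thesis
      unfolding nesterov_weight_Suc
      by (rule averaged_gradient_step_energy_decrease[OF convex grad smooth _ _ _ _ _ z'_def x'_def])
  qed
  ultimately show ?case
    using Suc.IH xz by simp
qed

theorem theorem5:
  fixes f :: "'a::euclidean_space \<Rightarrow> real"
    and grad :: "'a \<Rightarrow> 'a"
    and L :: real and x0 xs :: 'a and n :: nat
  assumes L_pos: "L > 0"
    and convex: "convex_on UNIV f"
    and grad: "\<And>x. (f has_derivative (\<lambda>h. grad x \<bullet> h)) (at x)"
    and smooth: "\<And>x y. norm (grad x - grad y) \<le> L * norm (x - y)"
    and minimizer: "\<And>x. f xs \<le> f x"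
    and n: "n \<ge> 1"
  shows "f (fst (nesterov grad L x0 n)) - f xs
           \<le> 2 * L / (real n * (real n + 1)) * (norm (x0 - xs))\<^sup>2"
proof -
  \<comment> \<open>The bound holds for every reference point \<open>xs\<close>.\<close>
  let ?A = "nesterov_weight L n"
  have A_pos: "?A > 0"
    using n L_pos by (simp add: nesterov_weight_def)
  have "?A * (f (fst (nesterov grad L x0 n)) - f xs) \<le> (norm (x0 - xs))\<^sup>2 / 2"
    using nesterov_energy_bound[OF L_pos convex grad smooth, of n x0 xs]
      zero_le_power2[of "norm (snd (nesterov grad L x0 n) - xs)"] by linarith
  then have "f (fst (nesterov grad L x0 n)) - f xs \<le> (norm (x0 - xs))\<^sup>2 / 2 / ?A"
    using A_pos by (simp add: field_simps)
  also have "\<dots> = 2 * L / (real n * (real n + 1)) * (norm (x0 - xs))\<^sup>2"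
    using n L_pos by (simp add: nesterov_weight_def field_simps)
  finally show ?thesis .
qed

end
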